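(* Let $G$ be a graph with at least one edge such that the subgraph of $G$ induced by all vertices of degree at least $3$ is a forest. Then $\chi_s'(G) \le 4\Delta(G) - 3$.
   Context: All graphs are finite and simple; $\Delta(G)$ is the maximum degree. A strong edge coloring of $G$ is an assignment of colors to the edges of $G$ such that every path with three edges receives three distinct colors; equivalently, any two distinct edges that share an endpoint, or whose endpoints are joined by an edge, receive different colors. The strong chromatic index $\chi_s'(G)$ is the minimum number of colors in a strong edge coloring of $G$. *)

theory Defs
  imports Main
begin

definition simple_graph :: "'a set \<Rightarrow> 'a set set \<Rightarrow> bool" where
  "simple_graph V E \<longleftrightarrow> finite V \<and> (\<forall>e\<in>E. e \<subseteq> V \<and> card e = 2)"

definition degree :: "'a set set \<Rightarrow> 'a \<Rightarrow> nat" where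
  "degree E v = card {e\<in>E. v \<in> e}"

definition max_degree :: "'a set \<Rightarrow> 'a set set \<Rightarrow> nat" where
  "max_degree V E = Max (degree E ` V)"

definition induced_edges :: "'a set set \<Rightarrow> 'a set \<Rightarrow> 'a set set" where
  "induced_edges E S = {e\<in>E. e \<subseteq> S}"

definition is_cycle :: "'a set \<Rightarrow> 'a set set \<Rightarrow> 'a list \<Rightarrow> bool" where
  "is_cycle V E vs \<longleftrightarrow> length vs \<ge> 3 \<and> distinct vs \<and> set vs \<subseteq> V \<and>
     (\<forall>i < length vs. {vs ! i, vs ! ((i + 1) mod length vs)} \<in> E)"

definition forest :: "'a set \<Rightarrow> 'a set set \<Rightarrow> bool" where
  "forest V E \<longleftrightarrow> \<not> (\<exists>vs. is_cycle V E vs)"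

definition strong_edge_coloring :: "'a set set \<Rightarrow> ('a set \<Rightarrow> 'c) \<Rightarrow> bool" where
  "strong_edge_coloring E c \<longleftrightarrow>
     (\<forall>e\<in>E. \<forall>f\<in>E. e \<noteq> f \<and> (e \<inter> f \<noteq> {} \<or> (\<exists>u\<in>e. \<exists>w\<in>f. {u, w} \<in> E)) \<longrightarrow> c e \<noteq> c f)"

definition strong_chromatic_index :: "'a set set \<Rightarrow> nat" where
  "strong_chromatic_index E = (LEAST k. \<exists>c :: 'a set \<Rightarrow> nat. strong_edge_coloring E c \<and> card (c ` E) = k)"

end

theory Submission
  imports Defs
begin

text \<open>
  Call a vertex high if its degree is at least 3. It suffices to find, in every nonempty set
  \<open>F\<close> of edges, an edge in conflict with at most \<open>4\<Delta> - 4\<close> other edges of \<open>F\<close>; greedy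
  colouring then uses at most \<open>4\<Delta> - 3\<close> colours. An edge in conflict with \<open>uv\<close> contains a
  neighbour \<open>x\<close> of \<open>u\<close> or of \<open>v\<close>, and \<open>x\<close> lies on at most 2 edges of \<open>F\<close> if it is low,
  and on none if it is high but not covered by \<open>F\<close>. Hence an edge of \<open>F\<close> with two low ends
  is good. Otherwise the high vertices covered by \<open>F\<close> induce a nonempty forest, the core. An
  \<open>F\<close>-edge from a leaf of the core to a low vertex is good. If there is none, every \<open>F\<close>-edge
  at a leaf \<open>u\<close> goes to the unique core neighbour \<open>p\<close> of \<open>u\<close>, and \<open>up\<close> is good as soon as
  \<open>p\<close> has at most one core neighbour that is not a leaf; such a \<open>p\<close> is found as a leaf of
  the core with its leaves removed.
\<close>

lemma card_2_obtain_other: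
  assumes "card f = 2" "x \<in> f"
  obtains y where "y \<noteq> x" "f = {x, y}"
  using assms by (metis card_2_iff insert_commute insert_iff singletonD)

lemma sum_le_two_level_bound:
  fixes g :: "'b \<Rightarrow> nat"
  assumes "finite A" "\<And>x. x \<in> A \<Longrightarrow> g x \<le> a + (if x \<in> Q then b else 0)"
  shows "sum g A \<le> a * card A + b * card (A \<inter> Q)"
proof -
  have "sum g A \<le> (\<Sum>x\<in>A. a + (if x \<in> Q then b else 0))" by (rule sum_mono) (rule assms(2))
  also have "\<dots> = a * card A + (\<Sum>x\<in>A \<inter> Q. b)"
    by (simp add: sum.distrib sum.If_cases[OF assms(1)])
  finally show ?thesis by (simp add: mult.commute)
qed

lemma greedy_coloring:
  fixes R :: "'b \<Rightarrow> 'b \<Rightarrow> bool"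
  assumes sym: "\<And>e f. R e f \<Longrightarrow> R f e"
    and degenerate: "\<And>F. F \<subseteq> F0 \<Longrightarrow> F \<noteq> {} \<Longrightarrow> \<exists>e\<in>F. card {f\<in>F. f \<noteq> e \<and> R e f} < k"
    and "finite F" "F \<subseteq> F0"
  shows "\<exists>c :: 'b \<Rightarrow> nat. (\<forall>e\<in>F. c e < k) \<and> (\<forall>e\<in>F. \<forall>f\<in>F. e \<noteq> f \<and> R e f \<longrightarrow> c e \<noteq> c f)"
  using assms(3,4)
proof (induction F rule: finite_psubset_induct)
  case (psubset F)
  show ?case
  proof (cases "F = {}")
    case False
    then obtain e where e: "e \<in> F" and few: "card {f\<in>F. f \<noteq> e \<and> R e f} < k"
      using degenerate psubset.prems by blast
    obtain c where c_range: "\<forall>x\<in>F - {e}. c x < k"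
      and c_proper: "\<forall>x\<in>F - {e}. \<forall>y\<in>F - {e}. x \<noteq> y \<and> R x y \<longrightarrow> c x \<noteq> c y"
      using psubset.IH[of "F - {e}"] e psubset.prems by blast
    define used where "used = c ` {f\<in>F. f \<noteq> e \<and> R e f}"
    have "card used < card {..<k}"
      using card_image_le[of "{f\<in>F. f \<noteq> e \<and> R e f}" c] psubset.hyps few
      unfolding used_def by simp
    then have "\<not> {..<k} \<subseteq> used"
      using card_mono[of used "{..<k}"] psubset.hyps unfolding used_def by auto
    then obtain col where col: "col < k" "col \<notin> used" by blast
    have "\<forall>x\<in>F. \<forall>y\<in>F. x \<noteq> y \<and> R x y \<longrightarrow> (c(e := col)) x \<noteq> (c(e := col)) y"
      using c_proper col sym unfolding used_def by (auto 0 3)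
    moreover have "\<forall>x\<in>F. (c(e := col)) x < k" using c_range col by simp
    ultimately show ?thesis by blast
  qed simp
qed

lemma strong_chromatic_index_le:
  fixes c :: "'a set \<Rightarrow> nat"
  assumes "strong_edge_coloring E c" "\<forall>e\<in>E. c e < k"
  shows "strong_chromatic_index E \<le> k"
proof -
  have "card (c ` E) \<le> card {..<k}"
    using assms(2) by (intro card_mono) auto
  moreover have "strong_chromatic_index E \<le> card (c ` E)"
    unfolding strong_chromatic_index_def by (rule Least_le) (use assms(1) in blast)
  ultimately show ?thesis by simp
qed

locale finite_simple_graph =
  fixes V :: "'a set" and E :: "'a set set"
  assumes simple_graph: "simple_graph V E"
begin

abbreviation \<Delta> :: nat where "\<Delta> \<equiv> max_degree V E"

lemma finite_vertices: "finite V"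
  using simple_graph by (simp add: simple_graph_def)

lemma edge_subset: "e \<in> E \<Longrightarrow> e \<subseteq> V"
  using simple_graph by (simp add: simple_graph_def)

lemma card_edge: "e \<in> E \<Longrightarrow> card e = 2"
  using simple_graph by (simp add: simple_graph_def)

lemma finite_edges: "finite E"
  using finite_vertices edge_subset by (meson finite_Pow_iff finite_subset PowI subsetI)

lemma edge_distinct_ends: "{x, y} \<in> E \<Longrightarrow> x \<noteq> y"
  using card_edge by fastforce

lemma edge_vertices: "{x, y} \<in> E \<Longrightarrow> x \<in> V \<and> y \<in> V"
  using edge_subset by blast

definition neighbours :: "'a \<Rightarrow> 'a set" where
  "neighbours x = {y. {x, y} \<in> E}"

lemma mem_neighbours [simp]: "y \<in> neighbours x \<longleftrightarrow> {x, y} \<in> E"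
  by (simp add: neighbours_def)

lemma finite_neighbours: "finite (neighbours x)"
proof -
  have "neighbours x \<subseteq> V" using edge_vertices by auto
  then show ?thesis using finite_vertices by (rule finite_subset)
qed

lemma card_neighbours: "card (neighbours x) = degree E x"
proof -
  have "bij_betw (\<lambda>y. {x, y}) (neighbours x) {f\<in>E. x \<in> f}"
  proof (rule bij_betwI')
    fix y z assume "y \<in> neighbours x" "z \<in> neighbours x"
    then have "y \<noteq> x" "z \<noteq> x" using edge_distinct_ends[of x y] edge_distinct_ends[of x z] by auto
    then show "({x, y} = {x, z}) = (y = z)" by (auto simp: doubleton_eq_iff)
  next
    fix f assume f: "f \<in> {f\<in>E. x \<in> f}"
    then have "card f = 2" "x \<in> f" using card_edge by auto
    then obtain y where "y \<noteq> x" "f = {x, y}" by (rule card_2_obtain_other)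
    with f show "\<exists>y\<in>neighbours x. f = {x, y}" by auto
  qed simp
  then show ?thesis unfolding degree_def by (rule bij_betw_same_card)
qed

lemma card_neighbours_Diff: "{u, v} \<in> E \<Longrightarrow> card (neighbours u - {v}) = degree E u - 1"
  using finite_neighbours card_neighbours by (simp add: card_Diff_singleton)

lemma degree_le_max_degree: "degree E x \<le> \<Delta>"
proof (cases "x \<in> V")
  case True
  then show ?thesis unfolding max_degree_def by (simp add: finite_vertices)
next
  case False
  then have "{e\<in>E. x \<in> e} = {}" using edge_subset by blast
  then show ?thesis unfolding degree_def by (metis card.empty zero_le)
qed

lemma max_degree_pos:
  assumes "E \<noteq> {}"
  shows "1 \<le> \<Delta>"
proof -
  obtain e u where "e \<in> E" "u \<in> e"
    using assms card_edge by (metis all_not_in_conv card.empty zero_neq_numeral)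
  then have "{e\<in>E. u \<in> e} \<noteq> {}" by blast
  then have "1 \<le> degree E u"
    unfolding degree_def using finite_edges by (simp add: Suc_le_eq card_gt_0_iff)
  then show ?thesis using degree_le_max_degree[of u] by linarith
qed

subsection \<open>Leaves of induced forests\<close>

definition is_path :: "'a set \<Rightarrow> 'a list \<Rightarrow> bool" where
  "is_path W xs \<longleftrightarrow> xs \<noteq> [] \<and> distinct xs \<and> set xs \<subseteq> W \<and>
     (\<forall>i. Suc i < length xs \<longrightarrow> {xs ! i, xs ! Suc i} \<in> E)"

lemma is_path_Cons:
  assumes "is_path W xs" "y \<in> W" "y \<notin> set xs" "{y, xs ! 0} \<in> E"
  shows "is_path W (y # xs)"
  using assms unfolding is_path_def by (auto simp: nth_Cons split: nat.split)

lemma is_cycle_take_path: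
  assumes path: "is_path W xs" and j: "2 \<le> j" "j < length xs" and closing: "{xs ! 0, xs ! j} \<in> E"
  shows "is_cycle W (induced_edges E W) (take (Suc j) xs)"
proof -
  let ?vs = "take (Suc j) xs"
  have len: "length ?vs = Suc j" using j by simp
  have set_vs: "set ?vs \<subseteq> W" using path set_take_subset unfolding is_path_def by fast
  have "{?vs ! i, ?vs ! ((i + 1) mod Suc j)} \<in> E" if i: "i < Suc j" for i
  proof (cases "i < j")
    case True
    then show ?thesis using path j unfolding is_path_def by simp
  next
    case False
    then have "i = j" using i by simp
    then show ?thesis using closing j by (simp add: insert_commute)
  qed
  moreover have "?vs ! i \<in> W" if "i < Suc j" for i
    using set_vs that len nth_mem by (metis subsetD)
  ultimately show ?thesis
    using path j set_vs len unfolding is_cycle_def is_path_def induced_edges_def by auto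
qed

text \<open>The first vertex of a longest path has at most one neighbour in \<open>W\<close>: a second one
  would either extend the path or close a cycle.\<close>
lemma forest_has_leaf:
  assumes "finite W" "W \<noteq> {}" and forest: "forest W (induced_edges E W)"
  shows "\<exists>x\<in>W. card {y\<in>W. {x, y} \<in> E} \<le> 1"
proof (rule ccontr)
  assume "\<not> ?thesis"
  then have two_nbrs: "\<And>x. x \<in> W \<Longrightarrow> 2 \<le> card {y\<in>W. {x, y} \<in> E}" by force
  obtain w where "w \<in> W" using assms(2) by blast
  then have "is_path W [w]" by (simp add: is_path_def)
  moreover have "\<forall>ys. is_path W ys \<longrightarrow> length ys < Suc (card W)"
    using assms(1) unfolding is_path_def by (auto simp: less_Suc_eq_le distinct_card[symmetric] intro: card_mono)
  ultimately obtain xs where xs: "is_path W xs" and longest: "\<And>ys. is_path W ys \<Longrightarrow> length ys \<le> length xs"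
    using Lattices_Big.ex_has_greatest_nat[of "is_path W" "[w]" length "Suc (card W)"] by blast
  have x0: "xs ! 0 \<in> W" using xs nth_mem[of 0 xs] unfolding is_path_def by auto
  \<comment> \<open>for a one-vertex path, \<open>xs ! 1\<close> is an unspecified vertex, which does no harm\<close>
  have "\<not> {y\<in>W. {xs ! 0, y} \<in> E} \<subseteq> {xs ! 1}"
  proof
    assume "{y\<in>W. {xs ! 0, y} \<in> E} \<subseteq> {xs ! 1}"
    then have "card {y\<in>W. {xs ! 0, y} \<in> E} \<le> card {xs ! 1}" by (rule card_mono[rotated]) simp
    with two_nbrs[OF x0] show False by simp
  qed
  then obtain y where y: "y \<in> W" "{xs ! 0, y} \<in> E" "y \<noteq> xs ! 1" by blast
  show False
  proof (cases "y \<in> set xs")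
    case False
    then have "is_path W (y # xs)" using is_path_Cons[OF xs y(1) False] y(2) by (simp add: insert_commute)
    then show False using longest[of "y # xs"] by simp
  next
    case True
    then obtain j where j: "j < length xs" "xs ! j = y" by (auto simp: in_set_conv_nth)
    have "j \<noteq> 0"
    proof
      assume "j = 0"
      with j y edge_distinct_ends[OF y(2)] show False by simp
    qed
    moreover have "j \<noteq> 1" using j y by auto
    ultimately have "is_cycle W (induced_edges E W) (take (Suc j) xs)"
      using is_cycle_take_path[OF xs _ j(1)] j y by simp
    then show False using forest unfolding forest_def by blast
  qed
qed

lemma forest_induced_mono:
  assumes "W \<subseteq> X" "forest X (induced_edges E X)"
  shows "forest W (induced_edges E W)"
  unfolding forest_def
proof
  assume "\<exists>vs. is_cycle W (induced_edges E W) vs"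
  then obtain vs where "is_cycle W (induced_edges E W) vs" ..
  then have "is_cycle X (induced_edges E X) vs"
    using assms(1) unfolding is_cycle_def induced_edges_def by auto
  with assms(2) show False unfolding forest_def by blast
qed

subsection \<open>Conflicts between edges\<close>

definition conflict :: "'a set \<Rightarrow> 'a set \<Rightarrow> bool" where
  "conflict e f \<longleftrightarrow> e \<inter> f \<noteq> {} \<or> (\<exists>u\<in>e. \<exists>w\<in>f. {u, w} \<in> E)"

lemma conflict_sym: "conflict e f \<Longrightarrow> conflict f e"
  unfolding conflict_def by (metis Int_commute insert_commute)

definition incident :: "'a set set \<Rightarrow> 'a \<Rightarrow> 'a set set" where
  "incident F x = {f\<in>F. x \<in> f}"

lemma finite_incident: "F \<subseteq> E \<Longrightarrow> finite (incident F x)"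
  unfolding incident_def using finite_edges by (rule finite_subset[rotated]) blast

lemma card_incident_le_degree: "F \<subseteq> E \<Longrightarrow> card (incident F x) \<le> degree E x"
  unfolding incident_def degree_def by (rule card_mono) (use finite_edges in auto)

lemma conflict_meets_neighbours:
  assumes uv: "{u, v} \<in> E" and f: "f \<in> E" "f \<noteq> {u, v}" and c: "conflict {u, v} f"
  shows "\<exists>x\<in>f. x \<in> (neighbours u - {v}) \<union> (neighbours v - {u})"
proof (cases "u \<in> f \<or> v \<in> f")
  case True
  then obtain a b where ab: "{a, b} = {u, v}" "a \<in> f" by blast
  then obtain z where "f = {a, z}" "z \<noteq> a" using card_edge[OF f(1)] card_2_obtain_other by metis
  with ab f show ?thesis by (auto simp: doubleton_eq_iff)
next
  case False
  then obtain a w where "a \<in> {u, v}" "w \<in> f" "{a, w} \<in> E"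
    using c unfolding conflict_def by blast
  with False show ?thesis by auto
qed

lemma card_conflicts_le:
  assumes F: "F \<subseteq> E" and uv: "{u, v} \<in> E"
  shows "card {f\<in>F. f \<noteq> {u, v} \<and> conflict {u, v} f}
     \<le> (\<Sum>x\<in>neighbours u - {v}. card (incident F x)) + (\<Sum>x\<in>neighbours v - {u}. card (incident F x))"
proof -
  let ?A = "\<Union>x\<in>neighbours u - {v}. incident F x" and ?B = "\<Union>x\<in>neighbours v - {u}. incident F x"
  have fin: "finite (neighbours u - {v})" "finite (neighbours v - {u})"
    using finite_neighbours by auto
  have "{f\<in>F. f \<noteq> {u, v} \<and> conflict {u, v} f} \<subseteq> ?A \<union> ?B"
  proof
    fix f assume f: "f \<in> {f\<in>F. f \<noteq> {u, v} \<and> conflict {u, v} f}"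
    then obtain x where "x \<in> f" "x \<in> (neighbours u - {v}) \<union> (neighbours v - {u})"
      using conflict_meets_neighbours[OF uv] F by blast
    with f show "f \<in> ?A \<union> ?B" unfolding incident_def by blast
  qed
  then have "card {f\<in>F. f \<noteq> {u, v} \<and> conflict {u, v} f} \<le> card (?A \<union> ?B)"
    by (rule card_mono[rotated]) (intro finite_UnI finite_UN_I fin finite_incident[OF F])
  also have "\<dots> \<le> card ?A + card ?B" by (rule card_Un_le)
  also have "\<dots> \<le> (\<Sum>x\<in>neighbours u - {v}. card (incident F x)) + (\<Sum>x\<in>neighbours v - {u}. card (incident F x))"
    by (intro add_mono card_UN_le fin)
  finally show ?thesis .
qed

subsection \<open>An edge with few conflicts\<close>

definition high :: "'a set" where
  "high = {v\<in>V. 3 \<le> degree E v}"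

lemma high_degree: "x \<in> high \<Longrightarrow> 3 \<le> degree E x"
  unfolding high_def by blast

lemma degree_le_2_if_not_high: "{x, y} \<in> E \<Longrightarrow> x \<notin> high \<Longrightarrow> degree E x \<le> 2"
  using edge_vertices unfolding high_def by fastforce

context
  fixes F :: "'a set set"
  assumes F_sub: "F \<subseteq> E"
begin

lemma card_incident_le_max_degree: "card (incident F x) \<le> \<Delta>"
  by (rule le_trans[OF card_incident_le_degree[OF F_sub] degree_le_max_degree])

lemma sum_card_incident_le:
  "finite A \<Longrightarrow> (\<Sum>x\<in>A. card (incident F x)) \<le> card A * \<Delta>"
  using sum_mono[of A "\<lambda>x. card (incident F x)" "\<lambda>_. \<Delta>"] card_incident_le_max_degree by simp

lemma few_conflicts_low_edge:
  assumes uv: "{u, v} \<in> F" and low: "u \<notin> high" "v \<notin> high"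
  shows "card {f\<in>F. f \<noteq> {u, v} \<and> conflict {u, v} f} \<le> 4 * \<Delta> - 4"
proof -
  have uv_E: "{u, v} \<in> E" "{v, u} \<in> E" using uv F_sub by (auto simp: insert_commute)
  define a where "a = card (neighbours u - {v})"
  define b where "b = card (neighbours v - {u})"
  have a: "a \<le> 1" "a \<le> \<Delta> - 1"
    using card_neighbours_Diff[OF uv_E(1)] degree_le_2_if_not_high[OF uv_E(1) low(1)] degree_le_max_degree[of u]
    by (simp_all add: a_def)
  have b: "b \<le> 1" "b \<le> \<Delta> - 1"
    using card_neighbours_Diff[OF uv_E(2)] degree_le_2_if_not_high[OF uv_E(2) low(2)] degree_le_max_degree[of v]
    by (simp_all add: b_def)
  have "card {f\<in>F. f \<noteq> {u, v} \<and> conflict {u, v} f}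
      \<le> (\<Sum>x\<in>neighbours u - {v}. card (incident F x)) + (\<Sum>x\<in>neighbours v - {u}. card (incident F x))"
    by (rule card_conflicts_le[OF F_sub uv_E(1)])
  also have "\<dots> \<le> a * \<Delta> + b * \<Delta>"
    unfolding a_def b_def by (intro add_mono sum_card_incident_le finite_Diff finite_neighbours)
  also have "\<dots> \<le> 4 * \<Delta> - 4"
  proof (cases "\<Delta> \<le> 1")
    case True
    then show ?thesis using a b by simp
  next
    case False
    have "a * \<Delta> + b * \<Delta> = (a + b) * \<Delta>" by (simp add: add_mult_distrib)
    also have "\<dots> \<le> 2 * \<Delta>" using a b by (intro mult_right_mono) simp_all
    finally show ?thesis using False by linarith
  qed
  finally show ?thesis .
qed

text \<open>The core induces a subforest of the forest on \<open>high\<close>; \<open>core_leaves\<close> are its leaves,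
  isolated vertices included.\<close>
definition core :: "'a set" where
  "core = {x\<in>high. \<exists>f\<in>F. x \<in> f}"

definition core_nbrs :: "'a \<Rightarrow> 'a set" where
  "core_nbrs x = {y\<in>core. {x, y} \<in> E}"

definition core_leaves :: "'a set" where
  "core_leaves = {x\<in>core. card (core_nbrs x) \<le> 1}"

lemma core_subset_high: "core \<subseteq> high"
  unfolding core_def by blast

lemma finite_core: "finite core"
  using core_subset_high finite_vertices unfolding high_def by (blast intro: finite_subset)

lemma finite_core_nbrs: "finite (core_nbrs x)"
  unfolding core_nbrs_def using finite_core by simp

lemma core_nbrs_unique: "card (core_nbrs x) \<le> 1 \<Longrightarrow> y \<in> core_nbrs x \<Longrightarrow> z \<in> core_nbrs x \<Longrightarrow> y = z"
  using finite_core_nbrs card_le_Suc0_iff_eq by (metis One_nat_def)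

lemma incident_not_core: "x \<in> high \<Longrightarrow> x \<notin> core \<Longrightarrow> incident F x = {}"
  unfolding core_def incident_def by blast

lemma card_incident_outside_core:
  assumes "{x, y} \<in> E" "x \<notin> core"
  shows "card (incident F x) \<le> 2"
proof (cases "x \<in> high")
  case True
  then show ?thesis using incident_not_core assms(2) by simp
next
  case False
  then show ?thesis
    by (rule le_trans[OF card_incident_le_degree[OF F_sub] degree_le_2_if_not_high[OF assms(1)]])
qed

lemma few_conflicts_leaf_low_edge:
  assumes uv: "{u, v} \<in> F" and u: "u \<in> core_leaves" and low: "v \<notin> high"
  shows "card {f\<in>F. f \<noteq> {u, v} \<and> conflict {u, v} f} \<le> 4 * \<Delta> - 4"
proof -
  have uv_E: "{u, v} \<in> E" "{v, u} \<in> E" using uv F_sub by (auto simp: insert_commute)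
  have u_core: "u \<in> core" and u_leaf: "card (core_nbrs u) \<le> 1"
    using u unfolding core_leaves_def by blast+
  have "3 \<le> degree E u" using high_degree core_subset_high u_core by blast
  then have "3 \<le> \<Delta>" using degree_le_max_degree[of u] by linarith
  define a where "a = card (neighbours u - {v})"
  define b where "b = card (neighbours v - {u})"
  define c where "c = card ((neighbours u - {v}) \<inter> core)"
  have a: "a \<le> \<Delta> - 1" using card_neighbours_Diff[OF uv_E(1)] degree_le_max_degree[of u] by (simp add: a_def)
  have b: "b \<le> 1" using card_neighbours_Diff[OF uv_E(2)] degree_le_2_if_not_high[OF uv_E(2) low]
    by (simp add: b_def)
  have "(neighbours u - {v}) \<inter> core \<subseteq> core_nbrs u" unfolding core_nbrs_def by auto
  then have "c \<le> card (core_nbrs u)" unfolding c_def by (rule card_mono[OF finite_core_nbrs])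
  then have c: "c \<le> 1" using u_leaf by linarith
  have sum_u: "(\<Sum>x\<in>neighbours u - {v}. card (incident F x)) \<le> 2 * a + (\<Delta> - 2) * c"
    unfolding a_def c_def
  proof (rule sum_le_two_level_bound)
    fix x assume x: "x \<in> neighbours u - {v}"
    show "card (incident F x) \<le> 2 + (if x \<in> core then \<Delta> - 2 else 0)"
    proof (cases "x \<in> core")
      case True
      then show ?thesis using card_incident_le_max_degree[of x] \<open>3 \<le> \<Delta>\<close> by simp
    next
      case False
      have "{x, u} \<in> E" using x by (simp add: insert_commute)
      then show ?thesis using card_incident_outside_core False by simp
    qed
  qed (simp add: finite_neighbours)
  have sum_v: "(\<Sum>x\<in>neighbours v - {u}. card (incident F x)) \<le> b * \<Delta>"
    unfolding b_def by (intro sum_card_incident_le finite_Diff finite_neighbours)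
  have "card {f\<in>F. f \<noteq> {u, v} \<and> conflict {u, v} f}
      \<le> (\<Sum>x\<in>neighbours u - {v}. card (incident F x)) + (\<Sum>x\<in>neighbours v - {u}. card (incident F x))"
    by (rule card_conflicts_le[OF F_sub uv_E(1)])
  also have "\<dots> \<le> 2 * a + (\<Delta> - 2) * c + b * \<Delta>" using sum_u sum_v by (rule add_mono)
  also have "\<dots> \<le> 4 * \<Delta> - 4"
  proof -
    have "(\<Delta> - 2) * c \<le> \<Delta> - 2" using c by (cases c) auto
    moreover have "b * \<Delta> \<le> \<Delta>" using b by (cases b) auto
    ultimately show ?thesis using a \<open>3 \<le> \<Delta>\<close> by linarith
  qed
  finally show ?thesis .
qed

context
  assumes leaf_edges_high: "\<forall>w\<in>core_leaves. \<forall>v. {w, v} \<in> F \<longrightarrow> v \<in> high"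
begin

lemma leaf_edge:
  assumes w: "w \<in> core_leaves" and f: "f \<in> F" "w \<in> f"
  obtains z where "f = {w, z}" "z \<in> core_nbrs w"
proof -
  have f_E: "f \<in> E" using f F_sub by blast
  obtain z where z: "f = {w, z}" using card_2_obtain_other[OF card_edge[OF f_E] f(2)] by blast
  then have "z \<in> core" using leaf_edges_high w f unfolding core_def by blast
  then show ?thesis using that z f_E unfolding core_nbrs_def by simp
qed

lemma few_conflicts_leaf_core_edge:
  assumes up: "{u, p} \<in> F" and u: "u \<in> core_leaves" and p: "p \<in> core"
    and p_near_leaf: "card (core_nbrs p - core_leaves) \<le> 1"
  shows "card {f\<in>F. f \<noteq> {u, p} \<and> conflict {u, p} f} \<le> 4 * \<Delta> - 4"
proof -
  have up_E: "{u, p} \<in> E" "{p, u} \<in> E" using up F_sub by (auto simp: insert_commute)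
  have u_leaf: "card (core_nbrs u) \<le> 1" using u unfolding core_leaves_def by blast
  have p_nbr: "p \<in> core_nbrs u" using p up_E unfolding core_nbrs_def by simp
  have "3 \<le> degree E p" using high_degree core_subset_high p by blast
  then have "3 \<le> \<Delta>" using degree_le_max_degree[of p] by linarith
  define a where "a = card (neighbours u - {p})"
  define b where "b = card (neighbours p - {u})"
  define c where "c = card ((neighbours p - {u}) \<inter> (core - core_leaves))"
  have a: "a \<le> \<Delta> - 1" using card_neighbours_Diff[OF up_E(1)] degree_le_max_degree[of u] by (simp add: a_def)
  have b: "b \<le> \<Delta> - 1" using card_neighbours_Diff[OF up_E(2)] degree_le_max_degree[of p]
    by (simp add: b_def)
  have "(neighbours p - {u}) \<inter> (core - core_leaves) \<subseteq> core_nbrs p - core_leaves"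
    unfolding core_nbrs_def by auto
  then have "c \<le> card (core_nbrs p - core_leaves)"
    unfolding c_def by (rule card_mono[OF finite_Diff[OF finite_core_nbrs]])
  then have c: "c \<le> 1" using p_near_leaf by linarith
  have "(\<Sum>x\<in>neighbours u - {p}. card (incident F x)) \<le> (\<Sum>x\<in>neighbours u - {p}. 1)"
  proof (rule sum_mono)
    fix x assume x: "x \<in> neighbours u - {p}"
    then have ux: "{u, x} \<in> E" "{x, u} \<in> E" by (auto simp: insert_commute)
    have x_core: "x \<notin> core"
    proof
      assume "x \<in> core"
      then have "x \<in> core_nbrs u" using ux(1) unfolding core_nbrs_def by simp
      then show False using core_nbrs_unique[OF u_leaf _ p_nbr] x by blast
    qed
    show "card (incident F x) \<le> 1"
    proof (cases "x \<in> high")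
      case True
      then show ?thesis using incident_not_core x_core by simp
    next
      case False
      then have "{u, x} \<notin> F" using leaf_edges_high u by blast
      then have "incident F x \<subseteq> {f\<in>E. x \<in> f} - {{u, x}}"
        using F_sub unfolding incident_def by blast
      then have "card (incident F x) \<le> card ({f\<in>E. x \<in> f} - {{u, x}})"
        by (rule card_mono[rotated]) (simp add: finite_edges)
      also have "\<dots> = degree E x - 1"
        unfolding degree_def using ux(1) by (simp add: card_Diff_singleton finite_edges)
      finally show ?thesis using degree_le_2_if_not_high[OF ux(2) False] by linarith
    qed
  qed
  then have sum_u: "(\<Sum>x\<in>neighbours u - {p}. card (incident F x)) \<le> a" by (simp add: a_def)
  have sum_p: "(\<Sum>x\<in>neighbours p - {u}. card (incident F x)) \<le> 2 * b + (\<Delta> - 2) * c"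
    unfolding b_def c_def
  proof (rule sum_le_two_level_bound)
    fix x assume x: "x \<in> neighbours p - {u}"
    then have px: "{p, x} \<in> E" "{x, p} \<in> E" by (auto simp: insert_commute)
    consider "x \<in> core - core_leaves" | "x \<in> core_leaves" | "x \<notin> core"
      unfolding core_leaves_def by blast
    then show "card (incident F x) \<le> 2 + (if x \<in> core - core_leaves then \<Delta> - 2 else 0)"
    proof cases
      case 1
      then show ?thesis using card_incident_le_max_degree[of x] \<open>3 \<le> \<Delta>\<close> by simp
    next
      case 2
      have x_leaf: "card (core_nbrs x) \<le> 1" using 2 unfolding core_leaves_def by blast
      have p_nbr': "p \<in> core_nbrs x" using p px(2) unfolding core_nbrs_def by simp
      have "incident F x \<subseteq> {{x, p}}"
      proof
        fix f assume "f \<in> incident F x"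
        then have "f \<in> F" "x \<in> f" unfolding incident_def by auto
        then obtain z where "f = {x, z}" "z \<in> core_nbrs x" by (rule leaf_edge[OF 2])
        with core_nbrs_unique[OF x_leaf _ p_nbr'] show "f \<in> {{x, p}}" by simp
      qed
      then have "card (incident F x) \<le> card {{x, p}}" by (rule card_mono[rotated]) simp
      then show ?thesis using 2 by simp
    next
      case 3
      then show ?thesis using card_incident_outside_core[OF px(2)] by simp
    qed
  qed (simp add: finite_neighbours)
  have "card {f\<in>F. f \<noteq> {u, p} \<and> conflict {u, p} f}
      \<le> (\<Sum>x\<in>neighbours u - {p}. card (incident F x)) + (\<Sum>x\<in>neighbours p - {u}. card (incident F x))"
    by (rule card_conflicts_le[OF F_sub up_E(1)])
  also have "\<dots> \<le> a + (2 * b + (\<Delta> - 2) * c)" using sum_u sum_p by (rule add_mono)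
  also have "\<dots> \<le> 4 * \<Delta> - 4"
  proof -
    have "(\<Delta> - 2) * c \<le> \<Delta> - 2" using c by (cases c) auto
    then show ?thesis using a b \<open>3 \<le> \<Delta>\<close> by linarith
  qed
  finally show ?thesis .
qed

text \<open>If all high vertices covered by \<open>F\<close> are leaves, any leaf and its neighbour work; otherwise
  remove the leaves and take a leaf \<open>p\<close> of the remaining forest. As \<open>p\<close> itself is no leaf,
  it has a leaf neighbour \<open>u\<close>, and \<open>p\<close> is the only core neighbour of \<open>u\<close>.\<close>
lemma exists_leaf_edge_near_leaf:
  assumes forest: "forest high (induced_edges E high)" and "core \<noteq> {}"
  shows "\<exists>u p. u \<in> core_leaves \<and> p \<in> core \<and> {u, p} \<in> F \<and> card (core_nbrs p - core_leaves) \<le> 1"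
proof (cases "core - core_leaves = {}")
  case True
  obtain u where u: "u \<in> core_leaves" using \<open>core \<noteq> {}\<close> True by blast
  then obtain f where "f \<in> F" "u \<in> f" unfolding core_leaves_def core_def by blast
  then obtain z where z: "f = {u, z}" "z \<in> core_nbrs u" by (rule leaf_edge[OF u])
  have z_core: "z \<in> core" using z(2) unfolding core_nbrs_def by blast
  have "core_nbrs z - core_leaves = {}" using True unfolding core_nbrs_def by blast
  then have "card (core_nbrs z - core_leaves) \<le> 1" by (metis card.empty le0)
  then show ?thesis using u z(1) z_core \<open>f \<in> F\<close> by blast
next
  case False
  let ?W = "core - core_leaves"
  have "finite ?W" using finite_core by simp
  moreover have "forest ?W (induced_edges E ?W)"
    by (rule forest_induced_mono[OF _ forest]) (use core_subset_high in blast)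
  ultimately obtain p where p: "p \<in> ?W" and p_near_leaf: "card {y\<in>?W. {p, y} \<in> E} \<le> 1"
    using forest_has_leaf[of ?W] False by blast
  have W_nbrs: "core_nbrs p - core_leaves = {y\<in>?W. {p, y} \<in> E}" unfolding core_nbrs_def by blast
  have "\<not> core_nbrs p \<subseteq> core_nbrs p - core_leaves"
  proof
    assume "core_nbrs p \<subseteq> core_nbrs p - core_leaves"
    then have "card (core_nbrs p) \<le> card (core_nbrs p - core_leaves)"
      by (rule card_mono[OF finite_Diff[OF finite_core_nbrs]])
    then show False using p p_near_leaf W_nbrs unfolding core_leaves_def by simp
  qed
  then obtain u where u_nbr: "u \<in> core_nbrs p" and u: "u \<in> core_leaves" by blast
  have u_leaf: "card (core_nbrs u) \<le> 1" using u unfolding core_leaves_def by blast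
  obtain f where "f \<in> F" "u \<in> f" using u unfolding core_leaves_def core_def by blast
  then obtain z where z: "f = {u, z}" "z \<in> core_nbrs u" by (rule leaf_edge[OF u])
  have "p \<in> core_nbrs u" using u_nbr p unfolding core_nbrs_def by (simp add: insert_commute)
  with z have "{u, p} \<in> F" using core_nbrs_unique[OF u_leaf] \<open>f \<in> F\<close> by blast
  moreover have "card (core_nbrs p - core_leaves) \<le> 1" using p_near_leaf W_nbrs by simp
  ultimately show ?thesis using u p by blast
qed

end

lemma exists_edge_few_conflicts:
  assumes forest: "forest high (induced_edges E high)" and "F \<noteq> {}"
  shows "\<exists>e\<in>F. card {f\<in>F. f \<noteq> e \<and> conflict e f} \<le> 4 * \<Delta> - 4"
proof (cases "\<exists>u v. {u, v} \<in> F \<and> u \<notin> high \<and> v \<notin> high")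
  case True
  then show ?thesis using few_conflicts_low_edge by blast
next
  case no_low_edge: False
  show ?thesis
  proof (cases "\<exists>u\<in>core_leaves. \<exists>v. {u, v} \<in> F \<and> v \<notin> high")
    case True
    then show ?thesis using few_conflicts_leaf_low_edge by blast
  next
    case False
    then have leaf_edges_high: "\<forall>w\<in>core_leaves. \<forall>v. {w, v} \<in> F \<longrightarrow> v \<in> high" by blast
    obtain f where f: "f \<in> F" using \<open>F \<noteq> {}\<close> by blast
    then have "card f = 2" using F_sub card_edge by blast
    then obtain a b where "f = {a, b}" by (auto simp: card_2_iff)
    then have "core \<noteq> {}" using no_low_edge f unfolding core_def by blast
    then obtain u p where "u \<in> core_leaves" "p \<in> core" "{u, p} \<in> F" "card (core_nbrs p - core_leaves) \<le> 1"
      using exists_leaf_edge_near_leaf[OF leaf_edges_high forest] by blast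
    then show ?thesis using few_conflicts_leaf_core_edge[OF leaf_edges_high] by blast
  qed
qed

end

end

theorem theorem4:
  fixes V :: "'a set" and E :: "'a set set"
  assumes "simple_graph V E"
    and "E \<noteq> {}"
    and "forest {v\<in>V. degree E v \<ge> 3} (induced_edges E {v\<in>V. degree E v \<ge> 3})"
  shows "strong_chromatic_index E \<le> 4 * max_degree V E - 3"
proof -
  interpret finite_simple_graph V E by (rule finite_simple_graph.intro) (rule assms(1))
  have forest: "forest high (induced_edges E high)" using assms(3) unfolding high_def .
  have "1 \<le> \<Delta>" using max_degree_pos assms(2) .
  have degenerate: "\<exists>e\<in>F. card {f\<in>F. f \<noteq> e \<and> conflict e f} < 4 * \<Delta> - 3"
    if F: "F \<subseteq> E" and "F \<noteq> {}" for F
  proof -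
    obtain e where "e \<in> F" "card {f\<in>F. f \<noteq> e \<and> conflict e f} \<le> 4 * \<Delta> - 4"
      using exists_edge_few_conflicts[OF F forest \<open>F \<noteq> {}\<close>] by blast
    then show ?thesis using \<open>1 \<le> \<Delta>\<close> by (intro bexI[of _ e]) simp_all
  qed
  obtain c :: "'a set \<Rightarrow> nat" where range: "\<forall>e\<in>E. c e < 4 * \<Delta> - 3"
    and proper: "\<forall>e\<in>E. \<forall>f\<in>E. e \<noteq> f \<and> conflict e f \<longrightarrow> c e \<noteq> c f"
    using greedy_coloring[OF conflict_sym degenerate finite_edges subset_refl] by blast
  have "strong_edge_coloring E c"
    using proper unfolding strong_edge_coloring_def conflict_def by blast
  then show ?thesis using range by (rule strong_chromatic_index_le)
qed

end
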